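(* Let $A \in \mathbb{R}^{m \times r}$, $b \in \mathbb{R}^m$, let $P = \{ x \in \mathbb{R}^r \mid Ax \ge b\}$ be a polyhedron and $C^r = \{ x \in \mathbb{R}^r \mid Ax \ge 0\}$ its recession cone. Every vector $x \in P$ is a conformal sum of elementary vectors of $P$; that is, there exist finite sets $E_0 \subseteq C^r$ and $E_1 \subseteq P$ of elementary vectors of $P$ such that \[ x = \sum_{e \in E_0} e + \sum_{e \in E_1} \lambda_e e \quad \text{with } \operatorname{sign}(e) \le \operatorname{sign}(x) \text{ for all } e \in E_0 \cup E_1, \] $\lambda_e \ge 0$, and $\sum_{e \in E_1} \lambda_e = 1$ (hence $|E_1| \ge 1$). The set $E = E_0 \cup E_1$ can be chosen such that $|E| \le \dim(P) + 1$ and $|E| \le |\operatorname{supp}(x)| + |\operatorname{supp}(Ax)| + 1$.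
   Context: For $x \in \mathbb{R}^n$, $\operatorname{supp}(x) = \{ i \mid x_i \neq 0\}$, and $\operatorname{sign}(x) \in \{-,0,+\}^n$ is obtained by applying the sign function componentwise. The relations $0 < -$ and $0 < +$ induce a componentwise partial order on $\{-,0,+\}^n$ ($-$ and $+$ incomparable). $\dim(P)$ is the dimension of the affine hull of $P$. A nonzero $x \in C^r$ is conformally non-decomposable (cND) if for all nonzero $x^1,x^2 \in C^r$ with $\operatorname{sign}(x^1),\operatorname{sign}(x^2) \le \operatorname{sign}(x)$, $x = x^1 + x^2$ implies $x^1 = \lambda x^2$ for some $\lambda > 0$. A vector $x \in P$ is convex-conformally non-decomposable (ccND) if for all $x^1,x^2 \in P$ with $\operatorname{sign}(x^1),\operatorname{sign}(x^2) \le \operatorname{sign}(x)$ and all $0<\lambda<1$, $x = \lambda x^1 + (1-\lambda) x^2$ implies $x^1 = x^2$. A vector $e \in C^r \cup P$ is an elementary vector of $P$ if either $e \in C^r$ is cND or $e \in P$ is ccND. *)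

theory Defs
  imports "HOL-Analysis.Analysis"
begin

definition polyhedron :: "real^'r^'m \<Rightarrow> real^'m \<Rightarrow> (real^'r) set" where
  "polyhedron A b = {x. \<forall>i. (A *v x) $ i \<ge> b $ i}"

definition rec_cone :: "real^'r^'m \<Rightarrow> (real^'r) set" where
  "rec_cone A = {x. \<forall>i. (A *v x) $ i \<ge> 0}"

definition supp :: "real^'n \<Rightarrow> 'n set" where
  "supp x = {i. x $ i \<noteq> 0}"

text \<open>sign(y) \<le> sign(x) componentwise (0 < -, 0 < +).\<close>
definition sign_le :: "real^'n \<Rightarrow> real^'n \<Rightarrow> bool" where
  "sign_le y x \<longleftrightarrow> (\<forall>i. y $ i = 0 \<or> sgn (y $ i) = sgn (x $ i))"

definition cND :: "real^'r^'m \<Rightarrow> real^'r \<Rightarrow> bool" where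
  "cND A x \<longleftrightarrow> x \<in> rec_cone A \<and> x \<noteq> 0 \<and>
     (\<forall>x1 x2. x1 \<in> rec_cone A \<longrightarrow> x2 \<in> rec_cone A \<longrightarrow> x1 \<noteq> 0 \<longrightarrow> x2 \<noteq> 0 \<longrightarrow>
        sign_le x1 x \<longrightarrow> sign_le x2 x \<longrightarrow> x = x1 + x2 \<longrightarrow> (\<exists>c>0. x1 = c *\<^sub>R x2))"

definition ccND :: "real^'r^'m \<Rightarrow> real^'m \<Rightarrow> real^'r \<Rightarrow> bool" where
  "ccND A b x \<longleftrightarrow> x \<in> polyhedron A b \<and>
     (\<forall>x1 x2 t. x1 \<in> polyhedron A b \<longrightarrow> x2 \<in> polyhedron A b \<longrightarrow>
        sign_le x1 x \<longrightarrow> sign_le x2 x \<longrightarrow> 0 < t \<longrightarrow> t < 1 \<longrightarrow>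
        x = t *\<^sub>R x1 + (1 - t) *\<^sub>R x2 \<longrightarrow> x1 = x2)"

end

theory Submission
  imports Defs
begin

text \<open>Homogenize: the pairs \<open>(y, t)\<close> with \<open>t \<ge> 0\<close>, \<open>A y \<ge> t b\<close> and
  \<open>sign(y) \<le> sign(x)\<close> form a convex cone \<open>K\<close>. On the closed orthant of \<open>x\<close> the linear
  functional \<open>(y, t) \<mapsto> sign(x) \<bullet> y + t\<close> equals \<open>\<parallel>y\<parallel>\<^sub>1 + t\<close>, so the slice \<open>S\<close> of \<open>K\<close> at
  level 1 is compact and convex. By Krein--Milman and Caratheodory, the normalized \<open>(x, 1)\<close> is a
  positive combination of at most \<open>aff_dim S + 1 = dim S\<close> extreme points of \<open>S\<close>. Extremality
  forbids conformal splittings: an extreme point \<open>(e, 0)\<close> is a cND vector of the recession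
  cone and an extreme point \<open>(e, s)\<close> with \<open>s > 0\<close> dehomogenizes to the ccND point \<open>e / s\<close>
  of \<open>P\<close>. Reading off both coordinates of the combination gives the conformal sum, and
  \<open>dim S\<close> is at most \<open>aff_dim P + 1\<close> (as \<open>S\<close> lies in the span of \<open>P \<times> {1}\<close>) and at most
  \<open>|supp x| + 1\<close>.\<close>

definition sign_vec :: "real^'n \<Rightarrow> real^'n" where
  "sign_vec x = (\<chi> j. sgn (x $ j))"

lemma sign_le_iff_sgn_mult: "sign_le y x \<longleftrightarrow> (\<forall>j. sgn (x $ j) * y $ j = \<bar>y $ j\<bar>)"
proof -
  have "(v = 0 \<or> sgn v = sgn u) \<longleftrightarrow> sgn u * v = \<bar>v\<bar>" for u v :: real
    by (cases u "0::real" rule: linorder_cases; cases v "0::real" rule: linorder_cases) auto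
  then show ?thesis unfolding sign_le_def by simp
qed

lemma sign_le_refl [simp]: "sign_le x x"
  by (simp add: sign_le_def)

lemma sign_le_trans: "sign_le z y \<Longrightarrow> sign_le y x \<Longrightarrow> sign_le z x"
  unfolding sign_le_def by (metis sgn_0_0)

lemma sign_le_zero_component: "sign_le y x \<Longrightarrow> x $ j = 0 \<Longrightarrow> y $ j = 0"
  unfolding sign_le_def by (metis sgn_0_0 sgn_eq_0_iff)

lemma sign_le_scaleR_left: "0 < c \<Longrightarrow> sign_le (c *\<^sub>R y) x \<longleftrightarrow> sign_le y x"
  unfolding sign_le_def by (simp add: sgn_mult)

lemma sign_le_scaleR_right: "0 < c \<Longrightarrow> sign_le y (c *\<^sub>R x) \<longleftrightarrow> sign_le y x"
  unfolding sign_le_def by (simp add: sgn_mult)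

lemma sign_le_scaleR_nonneg:
  assumes "0 \<le> c" "sign_le y x"
  shows "sign_le (c *\<^sub>R y) x"
proof (cases "c = 0")
  case True
  then show ?thesis by (simp add: sign_le_def)
next
  case False
  then show ?thesis using assms sign_le_scaleR_left[of c y x] by simp
qed

lemma sign_le_add:
  assumes "sign_le y x" "sign_le z x"
  shows "sign_le (y + z) x"
proof -
  have "sgn u * (v + w) = \<bar>v + w\<bar>" if "sgn u * v = \<bar>v\<bar>" "sgn u * w = \<bar>w\<bar>" for u v w :: real
    using that by (cases u "0::real" rule: linorder_cases) (simp_all add: abs_if split: if_splits)
  then show ?thesis
    using assms by (simp add: sign_le_iff_sgn_mult)
qed

lemma inner_sign_vec: "sign_le y x \<Longrightarrow> sign_vec x \<bullet> y = (\<Sum>j\<in>UNIV. \<bar>y $ j\<bar>)"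
  by (simp add: sign_vec_def inner_vec_def sign_le_iff_sgn_mult)

lemma norm_le_inner_sign_vec: "sign_le y x \<Longrightarrow> norm y \<le> sign_vec x \<bullet> y"
  by (simp add: inner_sign_vec norm_le_l1_cart)

lemma sum_axis_eq_self:
  fixes y :: "real^'n"
  assumes "supp y \<subseteq> J"
  shows "(\<Sum>j\<in>J. y $ j *\<^sub>R axis j 1) = y"
  using assms by (auto simp: vec_eq_iff axis_def supp_def sum.delta' if_distrib cong: if_cong)

lemma cND_scaleR:
  assumes "0 < c" "cND A e"
  shows "cND A (c *\<^sub>R e)"
proof -
  have cone: "d *\<^sub>R y \<in> rec_cone A" if "y \<in> rec_cone A" "0 < d" for y and d :: real
    using that by (simp add: rec_cone_def matrix_vector_mult_scaleR)
  show ?thesis unfolding cND_def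
  proof (intro conjI allI impI)
    show "c *\<^sub>R e \<in> rec_cone A" "c *\<^sub>R e \<noteq> 0"
      using assms cone unfolding cND_def by auto
    fix x1 x2 assume h: "x1 \<in> rec_cone A" "x2 \<in> rec_cone A" "x1 \<noteq> 0" "x2 \<noteq> 0"
      "sign_le x1 (c *\<^sub>R e)" "sign_le x2 (c *\<^sub>R e)" "c *\<^sub>R e = x1 + x2"
    define y1 y2 where "y1 = inverse c *\<^sub>R x1" and "y2 = inverse c *\<^sub>R x2"
    have "e = y1 + y2"
      using arg_cong[OF h(7), of "scaleR (inverse c)"] assms(1)
      by (simp add: y1_def y2_def scaleR_right_distrib)
    moreover have "y1 \<in> rec_cone A" "y2 \<in> rec_cone A" "y1 \<noteq> 0" "y2 \<noteq> 0"
      using h(1-4) assms(1) cone by (simp_all add: y1_def y2_def)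
    moreover have "sign_le y1 e" "sign_le y2 e"
      using h(5,6) assms(1) by (simp_all add: y1_def y2_def sign_le_scaleR_left sign_le_scaleR_right)
    ultimately obtain d where d: "0 < d" "y1 = d *\<^sub>R y2"
      using assms(2) unfolding cND_def by blast
    have "x1 = c *\<^sub>R y1" "x2 = c *\<^sub>R y2"
      using assms(1) by (simp_all add: y1_def y2_def)
    then have "x1 = d *\<^sub>R x2"
      using d(2) by (simp add: scaleR_left_commute)
    then show "\<exists>d>0. x1 = d *\<^sub>R x2"
      using d(1) by blast
  qed
qed

definition conformal_cone :: "real^'r^'m \<Rightarrow> real^'m \<Rightarrow> real^'r \<Rightarrow> ((real^'r) \<times> real) set" where
  "conformal_cone A b x = {(y, t). 0 \<le> t \<and> (\<forall>i. t * b $ i \<le> (A *v y) $ i) \<and> sign_le y x}"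

definition conformal_slice :: "real^'r^'m \<Rightarrow> real^'m \<Rightarrow> real^'r \<Rightarrow> ((real^'r) \<times> real) set" where
  "conformal_slice A b x = conformal_cone A b x \<inter> {z. (sign_vec x, 1) \<bullet> z = 1}"

lemma Pair_one_in_conformal_cone_iff:
  "(p, 1) \<in> conformal_cone A b x \<longleftrightarrow> p \<in> polyhedron A b \<and> sign_le p x"
  by (simp add: conformal_cone_def polyhedron_def)

lemma Pair_zero_in_conformal_cone_iff:
  "(y, 0) \<in> conformal_cone A b x \<longleftrightarrow> y \<in> rec_cone A \<and> sign_le y x"
  by (simp add: conformal_cone_def rec_cone_def)

lemma conformal_cone_add:
  assumes "z \<in> conformal_cone A b x" "z' \<in> conformal_cone A b x"
  shows "z + z' \<in> conformal_cone A b x"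
proof -
  obtain y t where z: "z = (y, t)" by (cases z)
  obtain y' t' where z': "z' = (y', t')" by (cases z')
  have "(t + t') * b $ i \<le> (A *v (y + y')) $ i" for i
    using assms z z' add_mono[of "t * b $ i" "(A *v y) $ i" "t' * b $ i" "(A *v y') $ i"]
    by (simp add: conformal_cone_def matrix_vector_right_distrib distrib_right)
  then show ?thesis
    using assms z z' by (simp add: conformal_cone_def sign_le_add)
qed

lemma conformal_cone_scaleR:
  assumes "z \<in> conformal_cone A b x" "0 \<le> c"
  shows "c *\<^sub>R z \<in> conformal_cone A b x"
proof -
  obtain y t where z: "z = (y, t)" by (cases z)
  have "c * (t * b $ i) \<le> c * (A *v y) $ i" for i
    using assms z by (intro mult_left_mono) (auto simp: conformal_cone_def)
  then show ?thesis
    using assms z by (simp add: conformal_cone_def sign_le_scaleR_nonneg matrix_vector_mult_scaleR mult.assoc)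
qed

lemma convex_conformal_cone: "convex (conformal_cone A b x)"
  unfolding convex_def by (simp add: conformal_cone_add conformal_cone_scaleR)

lemma closed_conformal_cone: "closed (conformal_cone A b x)"
proof -
  have "conformal_cone A b x = {z. 0 \<le> snd z \<and> (\<forall>i. snd z * b $ i \<le> (\<Sum>j\<in>UNIV. A $ i $ j * fst z $ j)) \<and>
      (\<forall>j. sgn (x $ j) * fst z $ j = \<bar>fst z $ j\<bar>)}"
    by (auto simp: conformal_cone_def sign_le_iff_sgn_mult matrix_vector_mult_def)
  also have "closed \<dots>"
    by (intro closed_Collect_conj closed_Collect_all closed_Collect_le closed_Collect_eq continuous_intros)
  finally show ?thesis .
qed

lemma conformal_slice_subset_hyperplane: "conformal_slice A b x \<subseteq> {z. (sign_vec x, 1) \<bullet> z = 1}"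
  by (simp add: conformal_slice_def)

lemma convex_conformal_slice: "convex (conformal_slice A b x)"
  unfolding conformal_slice_def by (intro convex_Int convex_conformal_cone convex_hyperplane)

lemma compact_conformal_slice: "compact (conformal_slice A b x)"
proof -
  have "conformal_slice A b x \<subseteq> cball 0 1 \<times> cball 0 1"
  proof
    fix z assume "z \<in> conformal_slice A b x"
    then obtain y t where z: "z = (y, t)" "0 \<le> t" "sign_le y x" "sign_vec x \<bullet> y + t = 1"
      by (auto simp: conformal_slice_def conformal_cone_def)
    have "norm y \<le> 1" "\<bar>t\<bar> \<le> 1"
      using norm_le_inner_sign_vec[OF z(3)] norm_ge_zero[of y] z(2,4) by linarith+
    then show "z \<in> cball 0 1 \<times> cball 0 1"
      using z(1) by simp
  qed
  then have "bounded (conformal_slice A b x)"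
    by (rule bounded_subset[OF bounded_Times[OF bounded_cball bounded_cball]])
  moreover have "closed (conformal_slice A b x)"
    unfolding conformal_slice_def by (intro closed_Int closed_conformal_cone closed_hyperplane)
  ultimately show ?thesis by (simp add: compact_eq_bounded_closed)
qed

lemma conformal_cone_normalize:
  assumes "z \<in> conformal_cone A b x" "z \<noteq> 0"
  shows "0 < (sign_vec x, 1) \<bullet> z" "inverse ((sign_vec x, 1) \<bullet> z) *\<^sub>R z \<in> conformal_slice A b x"
proof -
  obtain y t where z: "z = (y, t)" "0 \<le> t" "sign_le y x"
    using assms(1) by (auto simp: conformal_cone_def)
  have "0 < norm y + t"
    using assms(2) z by (cases "y = 0") (auto simp: zero_prod_def add_pos_nonneg)
  then show pos: "0 < (sign_vec x, 1) \<bullet> z"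
    using norm_le_inner_sign_vec[OF z(3)] z(1) by simp
  then show "inverse ((sign_vec x, 1) \<bullet> z) *\<^sub>R z \<in> conformal_slice A b x"
    using assms(1) by (simp add: conformal_slice_def conformal_cone_scaleR)
qed

lemma extreme_point_of_hyperplane_combination:
  fixes S :: "'a::real_inner set"
  assumes "z extreme_point_of S" "S \<subseteq> {y. h \<bullet> y = 1}" "a \<in> S" "c \<in> S"
    and "0 < \<alpha>" "0 < \<beta>" "z = \<alpha> *\<^sub>R a + \<beta> *\<^sub>R c"
  shows "a = c"
proof -
  have "h \<bullet> a = 1" "h \<bullet> c = 1"
    using assms(2-4) by auto
  have "1 = h \<bullet> z"
    using assms(1,2) by (auto simp: extreme_point_of_def)
  also have "\<dots> = \<alpha> + \<beta>"
    using \<open>h \<bullet> a = 1\<close> \<open>h \<bullet> c = 1\<close> by (simp add: assms(7) inner_add_right)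
  finally have "z = (1 - \<beta>) *\<^sub>R a + \<beta> *\<^sub>R c" "\<beta> < 1" using assms(5,7) by auto
  then show ?thesis
    using assms(1,3,4,6) unfolding extreme_point_of_def in_segment by blast
qed

lemma scaleR_eq_on_hyperplane:
  fixes z z' :: "'a::real_inner"
  assumes "h \<bullet> z = 1" "h \<bullet> z' = 1" "\<alpha> *\<^sub>R z = \<beta> *\<^sub>R z'" "\<alpha> \<noteq> 0"
  shows "z = z'"
proof -
  have "\<alpha> = \<beta>" using arg_cong[OF assms(3), of "inner h"] assms(1,2) by simp
  then show ?thesis using assms(3,4) by simp
qed

text \<open>Both parts, normalized into the slice, exhibit the extreme point as a proper convex
  combination, so they must coincide.\<close>
lemma extreme_point_of_conformal_slice_split:
  assumes "z extreme_point_of conformal_slice A b x"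
    and "z1 \<in> conformal_cone A b x" "z2 \<in> conformal_cone A b x" "z1 \<noteq> 0" "z2 \<noteq> 0" "z = z1 + z2"
  shows "\<exists>c>0. z1 = c *\<^sub>R z2"
proof -
  define c1 c2 where "c1 = (sign_vec x, 1) \<bullet> z1" and "c2 = (sign_vec x, 1) \<bullet> z2"
  have c: "0 < c1" "0 < c2"
    using conformal_cone_normalize(1) assms(2-5) unfolding c1_def c2_def by blast+
  have normalized_eq: "inverse c1 *\<^sub>R z1 = inverse c2 *\<^sub>R z2"
  proof (rule extreme_point_of_hyperplane_combination[OF assms(1) conformal_slice_subset_hyperplane])
    show "inverse c1 *\<^sub>R z1 \<in> conformal_slice A b x" "inverse c2 *\<^sub>R z2 \<in> conformal_slice A b x"
      using conformal_cone_normalize(2) assms(2-5) unfolding c1_def c2_def by blast+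
    show "z = c1 *\<^sub>R (inverse c1 *\<^sub>R z1) + c2 *\<^sub>R (inverse c2 *\<^sub>R z2)"
      using c assms(6) by simp
  qed (use c in auto)
  have "z1 = c1 *\<^sub>R (inverse c1 *\<^sub>R z1)"
    using c by simp
  also have "\<dots> = (c1 / c2) *\<^sub>R z2"
    unfolding normalized_eq by (simp add: divide_inverse)
  finally show ?thesis
    using c by (intro exI[of _ "c1 / c2"]) auto
qed

lemma cND_of_extreme_point:
  assumes "(e, 0) extreme_point_of conformal_slice A b x"
  shows "cND A e"
proof -
  have "(e, 0) \<in> conformal_slice A b x" using assms by (simp add: extreme_point_of_def)
  then have e: "e \<in> rec_cone A" "sign_le e x" "sign_vec x \<bullet> e = 1"
    by (simp_all add: conformal_slice_def Pair_zero_in_conformal_cone_iff)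
  show ?thesis unfolding cND_def
  proof (intro conjI allI impI)
    show "e \<in> rec_cone A" "e \<noteq> 0"
      using e(1,3) by auto
    fix x1 x2 assume h: "x1 \<in> rec_cone A" "x2 \<in> rec_cone A" "x1 \<noteq> 0" "x2 \<noteq> 0"
      "sign_le x1 e" "sign_le x2 e" "e = x1 + x2"
    have "sign_le x1 x" "sign_le x2 x"
      using sign_le_trans[OF h(5) e(2)] sign_le_trans[OF h(6) e(2)] .
    then have "(x1, 0) \<in> conformal_cone A b x" "(x2, 0) \<in> conformal_cone A b x"
      using h(1,2) by (simp_all add: Pair_zero_in_conformal_cone_iff)
    moreover have "(x1, 0::real) \<noteq> 0" "(x2, 0::real) \<noteq> 0" "(e, 0::real) = (x1, 0) + (x2, 0)"
      using h(3,4,7) by (simp_all add: zero_prod_def)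
    ultimately have "\<exists>c>0. (x1, 0::real) = c *\<^sub>R (x2, 0)"
      by (rule extreme_point_of_conformal_slice_split[OF assms])
    then obtain c where "0 < c" "(x1, 0::real) = c *\<^sub>R (x2, 0)"
      by blast
    then show "\<exists>c>0. x1 = c *\<^sub>R x2"
      by (intro exI[of _ c]) simp
  qed
qed

lemma ccND_of_extreme_point:
  assumes "(e, s) extreme_point_of conformal_slice A b x" "0 < s"
  shows "ccND A b (inverse s *\<^sub>R e)"
proof -
  define p where "p = inverse s *\<^sub>R e"
  have es: "(e, s) = s *\<^sub>R (p, 1)" using assms(2) by (simp add: p_def)
  have "(e, s) \<in> conformal_cone A b x"
    using assms(1) by (simp add: extreme_point_of_def conformal_slice_def)
  then have "inverse s *\<^sub>R (e, s) \<in> conformal_cone A b x"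
    using assms(2) by (intro conformal_cone_scaleR) auto
  also have "inverse s *\<^sub>R (e, s) = (p, 1)"
    using assms(2) by (simp add: p_def)
  finally have p: "p \<in> polyhedron A b" "sign_le p x"
    by (simp_all add: Pair_one_in_conformal_cone_iff)
  show ?thesis unfolding ccND_def p_def[symmetric]
  proof (intro conjI allI impI p(1))
    fix p1 p2 t assume h: "p1 \<in> polyhedron A b" "p2 \<in> polyhedron A b" "sign_le p1 p" "sign_le p2 p"
      "0 < t" "t < 1" "p = t *\<^sub>R p1 + (1 - t) *\<^sub>R p2"
    define z1 z2 where "z1 = (s * t) *\<^sub>R (p1, 1::real)" and "z2 = (s * (1 - t)) *\<^sub>R (p2, 1::real)"
    have "sign_le p1 x" "sign_le p2 x"
      using sign_le_trans[OF h(3) p(2)] sign_le_trans[OF h(4) p(2)] .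
    then have cone: "(p1, 1) \<in> conformal_cone A b x" "(p2, 1) \<in> conformal_cone A b x"
      using h(1,2) by (simp_all add: Pair_one_in_conformal_cone_iff)
    have "0 \<le> s * t" "0 \<le> s * (1 - t)"
      using assms(2) h(5,6) by simp_all
    then have "z1 \<in> conformal_cone A b x" "z2 \<in> conformal_cone A b x"
      unfolding z1_def z2_def using conformal_cone_scaleR cone by blast+
    moreover have "z1 \<noteq> 0" "z2 \<noteq> 0"
      using assms(2) h(5,6) by (simp_all add: z1_def z2_def zero_prod_def)
    moreover have "(e, s) = z1 + z2"
      unfolding es h(7) z1_def z2_def by (simp add: algebra_simps)
    ultimately have "\<exists>c>0. z1 = c *\<^sub>R z2"
      by (rule extreme_point_of_conformal_slice_split[OF assms(1)])
    then obtain c where "0 < c" "z1 = c *\<^sub>R z2"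
      by blast
    then have weights: "s * t = c * (s * (1 - t))"
      and scaled: "(s * t) *\<^sub>R p1 = (c * (s * (1 - t))) *\<^sub>R p2"
      by (simp_all add: z1_def z2_def)
    from scaled have "(s * t) *\<^sub>R p1 = (s * t) *\<^sub>R p2"
      unfolding weights[symmetric] .
    then show "p1 = p2"
      using assms(2) h(5) by simp
  qed
qed

lemma aff_dim_eq_dim_if_subset_hyperplane:
  fixes S :: "'a::euclidean_space set"
  assumes "S \<subseteq> {z. h \<bullet> z = 1}"
  shows "aff_dim S + 1 = int (dim S)"
proof -
  have "affine hull S \<subseteq> {z. h \<bullet> z = 1}"
    by (rule hull_minimal[OF assms]) (rule affine_hyperplane)
  then have "0 \<notin> affine hull S" by auto
  then have "aff_dim (insert 0 S) = aff_dim S + 1"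
    by (simp add: aff_dim_insert)
  moreover have "aff_dim (insert 0 S) = int (dim (insert 0 S))"
    by (rule aff_dim_zero) (simp add: hull_inc)
  ultimately show ?thesis
    by (simp add: dim_insert span_zero)
qed

lemma aff_dim_Pair_image:
  fixes S :: "'a::euclidean_space set" and c :: "'b::euclidean_space"
  shows "aff_dim ((\<lambda>p. (p, c)) ` S) = aff_dim S"
proof -
  have "(\<lambda>p. (p, c)) ` S = (+) (0, c) ` ((\<lambda>p. (p, 0::'b)) ` S)"
    by (simp add: image_image)
  moreover have "linear (\<lambda>p::'a. (p, 0::'b))" "inj (\<lambda>p::'a. (p, 0::'b))"
    by (auto intro: linearI injI)
  ultimately show ?thesis
    by (simp add: aff_dim_translation_eq)
qed

lemma dim_conformal_slice_le_card_supp: "dim (conformal_slice A b x) \<le> card (supp x) + 1"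
proof -
  define B where "B = insert (0, 1::real) ((\<lambda>j. (axis j (1::real), 0)) ` supp x)"
  have "z \<in> span B" if zS: "z \<in> conformal_slice A b x" for z
  proof -
    obtain y t where z: "z = (y, t)" "sign_le y x"
      using zS by (auto simp: conformal_slice_def conformal_cone_def)
    have "supp y \<subseteq> supp x"
      using sign_le_zero_component[OF z(2)] by (auto simp: supp_def)
    then have "(y, 0) = (\<Sum>j\<in>supp x. y $ j *\<^sub>R (axis j 1, 0::real))"
      by (simp add: sum_axis_eq_self prod_eq_iff fst_sum snd_sum)
    also have "\<dots> \<in> span B"
      by (intro span_sum span_mul span_base) (auto simp: B_def)
    finally have "(y, 0) \<in> span B" .
    moreover have "(0, 1) \<in> span B"
      by (rule span_base) (simp add: B_def)
    ultimately have "(y, 0) + t *\<^sub>R (0, 1) \<in> span B"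
      by (intro span_add span_mul)
    then show ?thesis
      using z(1) by simp
  qed
  then have "dim (conformal_slice A b x) \<le> card B"
    by (intro dim_le_card) (auto simp: B_def)
  also have "\<dots> \<le> card (supp x) + 1"
    unfolding B_def using card_image_le[of "supp x" "\<lambda>j. (axis j (1::real), 0::real)"]
    by (simp add: card_insert_if)
  finally show ?thesis .
qed

lemma dim_conformal_slice_le_aff_dim:
  assumes "x \<in> polyhedron A b"
  shows "int (dim (conformal_slice A b x)) \<le> aff_dim (polyhedron A b) + 1"
proof -
  define L where "L = (\<lambda>p. (p, 1::real)) ` polyhedron A b"
  have "z \<in> span L" if zS: "z \<in> conformal_slice A b x" for z
  proof -
    obtain y t where z: "z = (y, t)"
      by (cases z)
    with zS have cone: "(y, t) \<in> conformal_cone A b x"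
      by (simp add: conformal_slice_def)
    show ?thesis
    proof (cases "t = 0")
      case True
      then have "y \<in> rec_cone A"
        using cone by (simp add: Pair_zero_in_conformal_cone_iff)
      then have "x + y \<in> polyhedron A b"
        using assms by (auto simp: polyhedron_def rec_cone_def matrix_vector_right_distrib add_increasing2)
      then have "(x + y, 1) - (x, 1) \<in> span L"
        using assms by (intro span_diff span_base) (auto simp: L_def)
      then show ?thesis
        using z(1) True by simp
    next
      case False
      then have "0 < t"
        using cone by (simp add: conformal_cone_def)
      then have "inverse t *\<^sub>R (y, t) \<in> conformal_cone A b x"
        using cone by (intro conformal_cone_scaleR) auto
      then have "(inverse t *\<^sub>R y, 1) \<in> conformal_cone A b x"
        using \<open>0 < t\<close> by simp
      then have "t *\<^sub>R (inverse t *\<^sub>R y, 1) \<in> span L"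
        by (intro span_mul span_base) (auto simp: L_def Pair_one_in_conformal_cone_iff)
      then show ?thesis
        using z(1) \<open>0 < t\<close> by simp
    qed
  qed
  then have "dim (conformal_slice A b x) \<le> dim (span L)"
    by (intro dim_subset) blast
  then have "int (dim (conformal_slice A b x)) \<le> int (dim L)"
    by simp
  also have "int (dim L) = aff_dim L + 1"
    by (rule aff_dim_eq_dim_if_subset_hyperplane[of L "(0, 1)", symmetric]) (auto simp: L_def)
  also have "aff_dim L = aff_dim (polyhedron A b)"
    unfolding L_def by (rule aff_dim_Pair_image)
  finally show ?thesis .
qed

lemma conformal_slice_extreme_point_representation:
  assumes "x \<in> polyhedron A b"
  obtains T and w :: "(real^'r) \<times> real \<Rightarrow> real"
  where "finite T" "\<And>z. z \<in> T \<Longrightarrow> z extreme_point_of conformal_slice A b x"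
    "\<And>z. z \<in> T \<Longrightarrow> 0 < w z" "(\<Sum>z\<in>T. w z *\<^sub>R z) = (x, 1)"
    "card T \<le> dim (conformal_slice A b x)"
proof -
  let ?S = "conformal_slice A b x"
  define F where "F = {z. z extreme_point_of ?S}"
  define c where "c = (sign_vec x, 1) \<bullet> (x, 1::real)"
  have "(x, 1) \<in> conformal_cone A b x" "(x, 1::real) \<noteq> 0"
    using assms by (simp_all add: Pair_one_in_conformal_cone_iff zero_prod_def)
  then have c: "0 < c" "inverse c *\<^sub>R (x, 1) \<in> ?S"
    unfolding c_def by (rule conformal_cone_normalize)+
  have "?S = convex hull F"
    unfolding F_def by (rule Krein_Milman_Minkowski[OF compact_conformal_slice convex_conformal_slice])
  with c(2) have "inverse c *\<^sub>R (x, 1) \<in> convex hull F"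
    by simp
  then obtain T u where T: "finite T" "T \<subseteq> F" "int (card T) \<le> aff_dim F + 1"
      "\<forall>z\<in>T. 0 \<le> u z" "(\<Sum>z\<in>T. u z *\<^sub>R z) = inverse c *\<^sub>R (x, 1)"
    unfolding convex_hull_caratheodory_aff_dim mem_Collect_eq by blast
  define T' where "T' = {z \<in> T. 0 < u z}"
  have "(\<Sum>z\<in>T'. (c * u z) *\<^sub>R z) = (\<Sum>z\<in>T. (c * u z) *\<^sub>R z)"
    by (rule sum.mono_neutral_left) (use T(1,4) in \<open>auto simp: T'_def\<close>)
  also have "\<dots> = c *\<^sub>R (\<Sum>z\<in>T. u z *\<^sub>R z)"
    by (simp add: scaleR_sum_right)
  also have "\<dots> = (x, 1)"
    using T(5) c(1) by simp
  finally have sum_eq: "(\<Sum>z\<in>T'. (c * u z) *\<^sub>R z) = (x, 1)" .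
  have "F \<subseteq> ?S"
    by (auto simp: F_def extreme_point_of_def)
  have "int (card T') \<le> int (card T)"
    using T(1) by (simp add: T'_def card_mono)
  also have "\<dots> \<le> aff_dim ?S + 1"
    using T(3) aff_dim_subset[OF \<open>F \<subseteq> ?S\<close>] by linarith
  also have "\<dots> = int (dim ?S)"
    by (rule aff_dim_eq_dim_if_subset_hyperplane[OF conformal_slice_subset_hyperplane])
  finally have "card T' \<le> dim ?S"
    by simp
  moreover have "finite T'" "\<And>z. z \<in> T' \<Longrightarrow> z extreme_point_of ?S" "\<And>z. z \<in> T' \<Longrightarrow> 0 < c * u z"
    using T(1,2) c(1) by (auto simp: T'_def F_def)
  ultimately show thesis
    using that[of T' "\<lambda>z. c * u z"] sum_eq by simp
qed

lemma cND_decomposition_of_extreme_points: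
  fixes A :: "real^'r^'m"
  assumes "finite T" "\<And>z. z \<in> T \<Longrightarrow> z extreme_point_of conformal_slice A b x"
    and "\<And>z. z \<in> T \<Longrightarrow> snd z = 0" "\<And>z. z \<in> T \<Longrightarrow> 0 < w z"
  obtains E where "finite E" "card E \<le> card T" "\<And>e. e \<in> E \<Longrightarrow> cND A e \<and> sign_le e x"
    "(\<Sum>e\<in>E. e) = (\<Sum>z\<in>T. w z *\<^sub>R fst z)"
proof -
  define g where "g z = w z *\<^sub>R fst z" for z :: "(real^'r) \<times> real"
  have on_hyperplane: "(sign_vec x, 1) \<bullet> z = 1" if "z \<in> T" for z
    using assms(2)[OF that] by (auto simp: extreme_point_of_def conformal_slice_def)
  have scaled: "w z *\<^sub>R z = (g z, 0)" if "z \<in> T" for z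
    using assms(3)[OF that] by (simp add: g_def prod_eq_iff)
  have "inj_on g T"
  proof (rule inj_onI)
    fix z z' assume zz: "z \<in> T" "z' \<in> T" "g z = g z'"
    then have "w z *\<^sub>R z = w z' *\<^sub>R z'"
      using scaled by simp
    then show "z = z'"
      using assms(4)[OF zz(1)]
      by (intro scaleR_eq_on_hyperplane[OF on_hyperplane[OF zz(1)] on_hyperplane[OF zz(2)]]) auto
  qed
  have "cND A (g z) \<and> sign_le (g z) x" if zT: "z \<in> T" for z
  proof -
    obtain e where e: "z = (e, 0)"
      using assms(3)[OF zT] by (cases z) simp
    then have "cND A e"
      using assms(2)[OF zT] by (simp add: cND_of_extreme_point)
    moreover have "sign_le e x"
      using assms(2)[OF zT] e by (simp add: extreme_point_of_def conformal_slice_def Pair_zero_in_conformal_cone_iff)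
    ultimately show ?thesis
      using assms(4)[OF zT] e by (simp add: g_def cND_scaleR sign_le_scaleR_left)
  qed
  moreover have "(\<Sum>e\<in>g ` T. e) = (\<Sum>z\<in>T. w z *\<^sub>R fst z)"
    using \<open>inj_on g T\<close> by (simp add: sum.reindex) (simp add: g_def)
  ultimately show thesis
    using assms(1) by (intro that[of "g ` T"]) (auto simp: card_image_le)
qed

lemma ccND_decomposition_of_extreme_points:
  fixes A :: "real^'r^'m"
  assumes "finite T" "\<And>z. z \<in> T \<Longrightarrow> z extreme_point_of conformal_slice A b x"
    and "\<And>z. z \<in> T \<Longrightarrow> 0 < snd z" "\<And>z. z \<in> T \<Longrightarrow> 0 < w z"
  obtains E and l :: "real^'r \<Rightarrow> real"
  where "finite E" "card E \<le> card T" "\<And>e. e \<in> E \<Longrightarrow> ccND A b e \<and> sign_le e x \<and> 0 \<le> l e"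
    "(\<Sum>e\<in>E. l e *\<^sub>R e) = (\<Sum>z\<in>T. w z *\<^sub>R fst z)" "(\<Sum>e\<in>E. l e) = (\<Sum>z\<in>T. w z * snd z)"
proof -
  define g where "g z = inverse (snd z) *\<^sub>R fst z" for z :: "(real^'r) \<times> real"
  have on_hyperplane: "(sign_vec x, 1) \<bullet> z = 1" if "z \<in> T" for z
    using assms(2)[OF that] by (auto simp: extreme_point_of_def conformal_slice_def)
  have scaled: "inverse (snd z) *\<^sub>R z = (g z, 1)" if "z \<in> T" for z
    using assms(3)[OF that] by (simp add: g_def prod_eq_iff)
  have "inj_on g T"
  proof (rule inj_onI)
    fix z z' assume zz: "z \<in> T" "z' \<in> T" "g z = g z'"
    then have "inverse (snd z) *\<^sub>R z = inverse (snd z') *\<^sub>R z'"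
      using scaled by simp
    then show "z = z'"
      using assms(3)[OF zz(1)]
      by (intro scaleR_eq_on_hyperplane[OF on_hyperplane[OF zz(1)] on_hyperplane[OF zz(2)]]) auto
  qed
  define l where "l e = w (inv_into T g e) * snd (inv_into T g e)" for e
  have l: "l (g z) = w z * snd z" if "z \<in> T" for z
    using \<open>inj_on g T\<close> that by (simp add: l_def)
  have elementary: "ccND A b (g z) \<and> sign_le (g z) x \<and> 0 \<le> l (g z)" if zT: "z \<in> T" for z
  proof -
    have "ccND A b (g z)"
      using ccND_of_extreme_point[of "fst z" "snd z"] assms(2,3)[OF zT] by (simp add: g_def)
    moreover have "sign_le (fst z) x"
      using assms(2)[OF zT] by (auto simp: extreme_point_of_def conformal_slice_def conformal_cone_def)
    ultimately show ?thesis
      using assms(3,4)[OF zT] l[OF zT] by (simp add: g_def sign_le_scaleR_left)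
  qed
  have "(\<Sum>e\<in>g ` T. l e *\<^sub>R e) = (\<Sum>z\<in>T. l (g z) *\<^sub>R g z)"
    using \<open>inj_on g T\<close> by (simp add: sum.reindex)
  also have "\<dots> = (\<Sum>z\<in>T. w z *\<^sub>R fst z)"
  proof (rule sum.cong[OF refl])
    fix z assume "z \<in> T"
    then show "l (g z) *\<^sub>R g z = w z *\<^sub>R fst z"
      unfolding l[OF \<open>z \<in> T\<close>] using assms(3)[OF \<open>z \<in> T\<close>] by (simp add: g_def)
  qed
  finally have "(\<Sum>e\<in>g ` T. l e *\<^sub>R e) = (\<Sum>z\<in>T. w z *\<^sub>R fst z)" .
  moreover have "(\<Sum>e\<in>g ` T. l e) = (\<Sum>z\<in>T. w z * snd z)"
    using \<open>inj_on g T\<close> by (simp add: sum.reindex l)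
  ultimately show thesis
    using assms(1) elementary by (intro that[of "g ` T" l]) (auto simp: card_image_le)
qed

lemma conformal_decomposition_of_extreme_points:
  fixes A :: "real^'r^'m"
  assumes "finite T" "\<And>z. z \<in> T \<Longrightarrow> z extreme_point_of conformal_slice A b x"
    and "\<And>z. z \<in> T \<Longrightarrow> 0 < w z" "(\<Sum>z\<in>T. w z *\<^sub>R z) = (x, 1)"
  obtains E0 E1 and l :: "real^'r \<Rightarrow> real"
  where "finite E0" "finite E1" "\<forall>e\<in>E0. cND A e" "\<forall>e\<in>E1. ccND A b e"
    "x = (\<Sum>e\<in>E0. e) + (\<Sum>e\<in>E1. l e *\<^sub>R e)" "\<forall>e\<in>E0 \<union> E1. sign_le e x"
    "\<forall>e\<in>E1. l e \<ge> 0" "(\<Sum>e\<in>E1. l e) = 1" "card (E0 \<union> E1) \<le> card T"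
proof -
  define T0 T1 where "T0 = T \<inter> {z. snd z = 0}" and "T1 = T - {z. snd z = 0}"
  have nonneg: "0 \<le> snd z" if "z \<in> T" for z
    using assms(2)[OF that] by (auto simp: extreme_point_of_def conformal_slice_def conformal_cone_def)
  have T1_pos: "0 < snd z" if "z \<in> T1" for z
    using that nonneg[of z] unfolding T1_def by auto
  obtain E0 where E0: "finite E0" "card E0 \<le> card T0" "\<And>e. e \<in> E0 \<Longrightarrow> cND A e \<and> sign_le e x"
      "(\<Sum>e\<in>E0. e) = (\<Sum>z\<in>T0. w z *\<^sub>R fst z)"
    by (rule cND_decomposition_of_extreme_points[of T0 A b x w]) (use assms in \<open>auto simp: T0_def\<close>)
  obtain E1 l where E1: "finite E1" "card E1 \<le> card T1"
      "\<And>e. e \<in> E1 \<Longrightarrow> ccND A b e \<and> sign_le e x \<and> 0 \<le> l e"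
      "(\<Sum>e\<in>E1. l e *\<^sub>R e) = (\<Sum>z\<in>T1. w z *\<^sub>R fst z)" "(\<Sum>e\<in>E1. l e) = (\<Sum>z\<in>T1. w z * snd z)"
    by (rule ccND_decomposition_of_extreme_points[of T1 A b x w]) (use assms T1_pos in \<open>auto simp: T1_def\<close>)
  have split: "(\<Sum>z\<in>T. f z) = (\<Sum>z\<in>T0. f z) + (\<Sum>z\<in>T1. f z)" for f :: "_ \<Rightarrow> 'c::comm_monoid_add"
    unfolding T0_def T1_def by (rule sum.Int_Diff[OF assms(1)])
  have "x = (\<Sum>e\<in>E0. e) + (\<Sum>e\<in>E1. l e *\<^sub>R e)"
    using arg_cong[OF assms(4), of fst] split[of "\<lambda>z. w z *\<^sub>R fst z"] E0(4) E1(4)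
    by (simp add: fst_sum)
  moreover have "(\<Sum>e\<in>E1. l e) = 1"
    using arg_cong[OF assms(4), of snd] split[of "\<lambda>z. w z * snd z"] E1(5)
    by (simp add: snd_sum T0_def)
  moreover have "card (E0 \<union> E1) \<le> card T"
    using card_Un_le[of E0 E1] E0(2) E1(2) card_Int_Diff[OF assms(1), of "{z. snd z = 0}"]
    unfolding T0_def T1_def by linarith
  ultimately show thesis
    using E0 E1 by (intro that) auto
qed

theorem theorem3:
  fixes A :: "real^'r^'m" and b :: "real^'m" and x :: "real^'r"
  assumes "x \<in> polyhedron A b"
  shows "\<exists>E0 E1 (l :: real^'r \<Rightarrow> real).
           finite E0 \<and> finite E1 \<and>
           (\<forall>e\<in>E0. cND A e) \<and> (\<forall>e\<in>E1. ccND A b e) \<and>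
           x = (\<Sum>e\<in>E0. e) + (\<Sum>e\<in>E1. l e *\<^sub>R e) \<and>
           (\<forall>e\<in>E0 \<union> E1. sign_le e x) \<and>
           (\<forall>e\<in>E1. l e \<ge> 0) \<and> (\<Sum>e\<in>E1. l e) = 1 \<and>
           int (card (E0 \<union> E1)) \<le> aff_dim (polyhedron A b) + 1 \<and>
           card (E0 \<union> E1) \<le> card (supp x) + card (supp (A *v x)) + 1"
proof -
  obtain T w where T: "finite T" "\<And>z. z \<in> T \<Longrightarrow> z extreme_point_of conformal_slice A b x"
      "\<And>z. z \<in> T \<Longrightarrow> 0 < w z" "(\<Sum>z\<in>T. w z *\<^sub>R z) = (x, 1)"
      "card T \<le> dim (conformal_slice A b x)"
    using conformal_slice_extreme_point_representation[OF assms] by blast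
  obtain E0 E1 l where E: "finite E0" "finite E1" "\<forall>e\<in>E0. cND A e" "\<forall>e\<in>E1. ccND A b e"
      "x = (\<Sum>e\<in>E0. e) + (\<Sum>e\<in>E1. l e *\<^sub>R e)" "\<forall>e\<in>E0 \<union> E1. sign_le e x"
      "\<forall>e\<in>E1. l e \<ge> 0" "(\<Sum>e\<in>E1. l e) = 1" "card (E0 \<union> E1) \<le> card T"
    by (rule conformal_decomposition_of_extreme_points[OF T(1-4)])
  have "card (E0 \<union> E1) \<le> dim (conformal_slice A b x)"
    using E(9) T(5) by linarith
  then have "int (card (E0 \<union> E1)) \<le> aff_dim (polyhedron A b) + 1"
       "card (E0 \<union> E1) \<le> card (supp x) + card (supp (A *v x)) + 1"
    using dim_conformal_slice_le_aff_dim[OF assms] dim_conformal_slice_le_card_supp[of A b x] by linarith+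
  with E show ?thesis
    by blast
qed

end
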